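(* Let $\|\cdot\|$ be a norm on $\mathbb{R}^d$ with dual norm $\|z\|_*=\max_{\|u\|\le1}\langle u,z\rangle$, let $\Phi$ be a mirror map whose Bregman divergence satisfies $\frac{m}{2}\|x-y\|^2\le D_\Phi(x,y)\le\frac{M}{2}\|x-y\|^2$ for constants $0<m\le M$, and let $f_t$ be a convex function on the convex set $\mathcal{X}$, with $\Phi$ and $f_t$ continuously differentiable on $\mathcal{X}$. Fix a point $x_{t-1}$ and, for $K_l=\{x: f_t(x)\le l\}$, let $x(l)=\Pi^\Phi_{K_l}(x_{t-1})$. Then the function $$h(l)=\frac{\|\nabla\Phi(x_{t-1})-\nabla\Phi(x(l))\|_*}{\|\nabla f_t(x(l))\|_*}$$ is continuous in $l$.
   Context: For a convex function $\Phi$, the Bregman divergence is $D_\Phi(x,y)=\Phi(x)-\Phi(y)-\nabla\Phi(y)^T(x-y)$, and the Bregman projection of $x$ onto a convex set $K$ is $\Pi^\Phi_K(x)=\arg\min_{y\in K}D_\Phi(y,x)$. *)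

theory Defs
  imports "HOL-Analysis.Analysis"
begin

definition is_norm :: "('a::euclidean_space \<Rightarrow> real) \<Rightarrow> bool" where
  "is_norm N \<longleftrightarrow>
     (\<forall>x. 0 \<le> N x) \<and> (\<forall>x. N x = 0 \<longleftrightarrow> x = 0) \<and>
     (\<forall>c x. N (c *\<^sub>R x) = \<bar>c\<bar> * N x) \<and>
     (\<forall>x y. N (x + y) \<le> N x + N y)"

text \<open>Dual norm: the supremum (attained, i.e. a maximum) of the inner product over the unit ball.\<close>
definition dual_norm :: "('a::euclidean_space \<Rightarrow> real) \<Rightarrow> 'a \<Rightarrow> real" where
  "dual_norm N z = Sup {u \<bullet> z | u. N u \<le> 1}"

definition bregman :: "('a::euclidean_space \<Rightarrow> real) \<Rightarrow> ('a \<Rightarrow> 'a) \<Rightarrow> 'a \<Rightarrow> 'a \<Rightarrow> real" where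
  "bregman Phi gPhi x y = Phi x - Phi y - gPhi y \<bullet> (x - y)"

definition bregman_proj :: "('a::euclidean_space \<Rightarrow> real) \<Rightarrow> ('a \<Rightarrow> 'a) \<Rightarrow> 'a set \<Rightarrow> 'a \<Rightarrow> 'a" where
  "bregman_proj Phi gPhi K x = (ARG_MIN (\<lambda>y. bregman Phi gPhi y x) y. y \<in> K)"

end

theory Submission
  imports Defs
begin

text \<open>
  The Bregman divergence D y = D_Phi(y, x0) is m-strongly convex with respect to the norm,
  so its minimiser x(l) over the sublevel set K_l grows away from any other feasible point
  quadratically: D(x(l)) + m/4 \<parallel>y - x(l)\<parallel>^2 \<le> D(y) for y \<in> K_l. Applied to y = x(l) for l \<le> l',
  this bounds \<parallel>x(l) - x(l')\<parallel>^2 by the difference of the optimal values v(l) = D(x(l)).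
  The value function v is convex on the open set of levels above inf f, hence continuous,
  and so l \<mapsto> x(l) is continuous. Finally the denominator never vanishes: if \<nabla>f(x(l)) = 0,
  then x(l) minimises f globally, the constraint is slack at x(l), so x(l) minimises D globally,
  i.e. x(l) = x0 and x0 minimises f; in that case x(l) = x0 for all l and h is constant.
\<close>

section \<open>General norms on a Euclidean space\<close>

lemma
  assumes "is_norm N"
  shows is_norm_nonneg: "0 \<le> N x"
    and is_norm_eq_0_iff: "N x = 0 \<longleftrightarrow> x = 0"
    and is_norm_scaleR: "N (c *\<^sub>R x) = \<bar>c\<bar> * N x"
    and is_norm_triangle: "N (x + y) \<le> N x + N y"
  using assms unfolding is_norm_def by auto

lemma is_norm_minus_commute: "is_norm N \<Longrightarrow> N (x - y) = N (y - x)"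
  using is_norm_scaleR[of N "-1" "x - y"] by simp

lemma is_norm_pos: "is_norm N \<Longrightarrow> x \<noteq> 0 \<Longrightarrow> 0 < N x"
  using is_norm_nonneg is_norm_eq_0_iff by (metis less_eq_real_def)

lemma is_norm_diff_le: "is_norm N \<Longrightarrow> \<bar>N x - N y\<bar> \<le> N (x - y)"
  using is_norm_triangle[of N y "x - y"] is_norm_triangle[of N x "y - x"]
  by (simp add: is_norm_minus_commute[of N y x])

lemma is_norm_sum_le:
  assumes "is_norm N" "finite A"
  shows "N (\<Sum>i\<in>A. h i) \<le> (\<Sum>i\<in>A. N (h i))"
  using assms(2)
proof (induction A rule: finite_induct)
  case empty
  then show ?case using is_norm_eq_0_iff[OF assms(1), of 0] by simp
next
  case (insert a A)
  then show ?case using is_norm_triangle[OF assms(1), of "h a" "sum h A"] by simp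
qed

lemma is_norm_le_norm:
  fixes N :: "'a::euclidean_space \<Rightarrow> real"
  assumes "is_norm N"
  shows "N x \<le> (\<Sum>b\<in>Basis. N b) * norm x"
proof -
  have "N x = N (\<Sum>b\<in>Basis. (x \<bullet> b) *\<^sub>R b)"
    by (simp add: euclidean_representation)
  also have "\<dots> \<le> (\<Sum>b\<in>Basis. N ((x \<bullet> b) *\<^sub>R b))"
    by (rule is_norm_sum_le[OF assms]) simp
  also have "\<dots> = (\<Sum>b\<in>Basis. \<bar>x \<bullet> b\<bar> * N b)"
    by (simp add: is_norm_scaleR[OF assms])
  also have "\<dots> \<le> (\<Sum>b\<in>Basis. norm x * N b)"
    by (intro sum_mono mult_right_mono Basis_le_norm is_norm_nonneg[OF assms])
  finally show ?thesis
    by (simp add: sum_distrib_left mult.commute)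
qed

lemma continuous_on_is_norm:
  fixes N :: "'a::euclidean_space \<Rightarrow> real"
  assumes "is_norm N"
  shows "continuous_on S N"
proof (rule lipschitz_on_continuous_on)
  show "(\<Sum>b\<in>Basis. N b)-lipschitz_on S N"
  proof (rule lipschitz_onI)
    fix x y
    have "\<bar>N x - N y\<bar> \<le> N (x - y)"
      by (rule is_norm_diff_le[OF assms])
    also have "\<dots> \<le> (\<Sum>b\<in>Basis. N b) * dist x y"
      using is_norm_le_norm[OF assms] by (simp add: dist_norm)
    finally show "dist (N x) (N y) \<le> (\<Sum>b\<in>Basis. N b) * dist x y"
      by (simp add: dist_real_def)
  qed (simp add: sum_nonneg is_norm_nonneg[OF assms])
qed

lemma is_norm_ge_norm:
  fixes N :: "'a::euclidean_space \<Rightarrow> real"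
  assumes "is_norm N"
  obtains c where "0 < c" "\<And>x. c * norm x \<le> N x"
proof -
  obtain b :: 'a where "b \<in> Basis"
    using nonempty_Basis by blast
  then have "sphere (0::'a) 1 \<noteq> {}"
    by (auto simp: norm_Basis)
  then obtain p where p: "p \<in> sphere 0 1" "\<And>y. y \<in> sphere 0 1 \<Longrightarrow> N p \<le> N y"
    using continuous_attains_inf[OF compact_sphere _ continuous_on_is_norm[OF assms]] by blast
  have "N p * norm x \<le> N x" for x
  proof (cases "x = 0")
    case True
    then show ?thesis using is_norm_eq_0_iff[OF assms, of 0] by simp
  next
    case False
    then have "N p \<le> N ((1 / norm x) *\<^sub>R x)"
      using p(2) by simp
    then show ?thesis
      using False by (simp add: is_norm_scaleR[OF assms] field_simps)
  qed
  moreover have "0 < N p"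
    using p(1) by (intro is_norm_pos[OF assms]) auto
  ultimately show thesis
    using that by blast
qed

lemma is_norm_unit_ball_bounded:
  fixes N :: "'a::euclidean_space \<Rightarrow> real"
  assumes "is_norm N"
  obtains B where "0 \<le> B" "\<And>u. N u \<le> 1 \<Longrightarrow> norm u \<le> B"
proof -
  obtain c where c: "0 < c" "\<And>x. c * norm x \<le> N x"
    using is_norm_ge_norm[OF assms] by blast
  have "norm u \<le> 1 / c" if "N u \<le> 1" for u
    using c(2)[of u] that c(1) by (simp add: field_simps)
  then show thesis
    using that[of "1 / c"] c(1) by simp
qed

section \<open>The dual norm\<close>

lemma dual_norm_ge:
  fixes N :: "'a::euclidean_space \<Rightarrow> real"
  assumes "is_norm N" "N u \<le> 1"
  shows "u \<bullet> z \<le> dual_norm N z"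
proof -
  obtain B where B: "\<And>u. N u \<le> 1 \<Longrightarrow> norm u \<le> B"
    using is_norm_unit_ball_bounded[OF assms(1)] by blast
  have "w \<bullet> z \<le> B * norm z" if "N w \<le> 1" for w
    using Cauchy_Schwarz_ineq2[of w z] B[OF that]
    by (smt (verit, best) abs_ge_self mult_right_mono norm_ge_zero)
  then have "bdd_above {w \<bullet> z | w. N w \<le> 1}"
    by (auto intro!: bdd_aboveI)
  then show ?thesis
    unfolding dual_norm_def using assms(2) by (auto intro!: cSup_upper)
qed

lemma dual_norm_le:
  fixes N :: "'a::euclidean_space \<Rightarrow> real"
  assumes "is_norm N" "\<And>u. N u \<le> 1 \<Longrightarrow> u \<bullet> z \<le> B"
  shows "dual_norm N z \<le> B"
  unfolding dual_norm_def
proof (rule cSup_least)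
  have "(0::'a) \<bullet> z \<in> {u \<bullet> z | u. N u \<le> 1}"
    using is_norm_eq_0_iff[OF assms(1), of 0] by (intro CollectI exI[of _ 0]) simp
  then show "{u \<bullet> z | u. N u \<le> 1} \<noteq> {}"
    by blast
qed (use assms(2) in auto)

lemma dual_norm_pos:
  fixes N :: "'a::euclidean_space \<Rightarrow> real"
  assumes "is_norm N" "z \<noteq> 0"
  shows "0 < dual_norm N z"
proof -
  have Nz: "0 < N z"
    using is_norm_pos[OF assms] .
  then have "N ((1 / N z) *\<^sub>R z) \<le> 1"
    by (simp add: is_norm_scaleR[OF assms(1)])
  then have "((1 / N z) *\<^sub>R z) \<bullet> z \<le> dual_norm N z"
    by (rule dual_norm_ge[OF assms(1)])
  moreover have "0 < ((1 / N z) *\<^sub>R z) \<bullet> z"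
    using Nz assms(2) by simp
  ultimately show ?thesis
    by linarith
qed

lemma continuous_on_dual_norm:
  fixes N :: "'a::euclidean_space \<Rightarrow> real"
  assumes "is_norm N"
  shows "continuous_on S (dual_norm N)"
proof -
  obtain B where B: "0 \<le> B" "\<And>u. N u \<le> 1 \<Longrightarrow> norm u \<le> B"
    using is_norm_unit_ball_bounded[OF assms] by blast
  have "dual_norm N z \<le> dual_norm N w + B * dist z w" for z w
  proof (rule dual_norm_le[OF assms])
    fix u assume u: "N u \<le> 1"
    have "u \<bullet> (z - w) \<le> norm u * norm (z - w)"
      by (metis Cauchy_Schwarz_ineq2 abs_le_D1)
    also have "\<dots> \<le> B * dist z w"
      using B(2)[OF u] by (simp add: dist_norm mult_right_mono)
    finally show "u \<bullet> z \<le> dual_norm N w + B * dist z w"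
      using dual_norm_ge[OF assms u, of w] by (simp add: inner_diff_right)
  qed
  then have "B-lipschitz_on S (dual_norm N)"
    using B(1) by (intro lipschitz_onI) (smt (verit, best) dist_commute dist_real_def)
  then show ?thesis
    by (rule lipschitz_on_continuous_on)
qed

section \<open>Strong convexity\<close>

definition strongly_convex_on :: "('a::real_vector \<Rightarrow> real) \<Rightarrow> real \<Rightarrow> 'a set \<Rightarrow> ('a \<Rightarrow> real) \<Rightarrow> bool"
  where "strongly_convex_on N m X g \<longleftrightarrow>
    (\<forall>x\<in>X. \<forall>y\<in>X. \<forall>t::real. 0 \<le> t \<longrightarrow> t \<le> 1 \<longrightarrow>
       g ((1 - t) *\<^sub>R x + t *\<^sub>R y) \<le> (1 - t) * g x + t * g y - m / 2 * t * (1 - t) * (N (y - x))\<^sup>2)"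

lemma strongly_convex_onD:
  "strongly_convex_on N m X g \<Longrightarrow> x \<in> X \<Longrightarrow> y \<in> X \<Longrightarrow> 0 \<le> (t::real) \<Longrightarrow> t \<le> 1 \<Longrightarrow>
    g ((1 - t) *\<^sub>R x + t *\<^sub>R y) \<le> (1 - t) * g x + t * g y - m / 2 * t * (1 - t) * (N (y - x))\<^sup>2"
  unfolding strongly_convex_on_def by blast

lemma strongly_convex_on_subset:
  "strongly_convex_on N m X g \<Longrightarrow> Y \<subseteq> X \<Longrightarrow> strongly_convex_on N m Y g"
  unfolding strongly_convex_on_def by blast

lemma strongly_convex_on_imp_convex_on:
  assumes "strongly_convex_on N m X g" "convex X" "0 \<le> m"
  shows "convex_on X g"
proof (rule convex_onI[OF _ assms(2)])
  fix t :: real and x y assume "0 < t" "t < 1" "x \<in> X" "y \<in> X"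
  moreover have "0 \<le> m / 2 * t * (1 - t) * (N (y - x))\<^sup>2"
    using \<open>0 < t\<close> \<open>t < 1\<close> assms(3) by simp
  ultimately show "g ((1 - t) *\<^sub>R x + t *\<^sub>R y) \<le> (1 - t) * g x + t * g y"
    using strongly_convex_onD[OF assms(1)] by (smt (verit))
qed

lemma strongly_convex_on_add_affine:
  assumes "strongly_convex_on N m X g"
  shows "strongly_convex_on N m X (\<lambda>x. g x + a \<bullet> x + b)"
  using assms unfolding strongly_convex_on_def
  by (simp add: inner_add_right algebra_simps)

lemma strongly_convex_on_bregman_lower_bound:
  fixes N :: "'a::euclidean_space \<Rightarrow> real"
  assumes norm: "is_norm N" and "convex X"
    and lower: "\<And>x y. x \<in> X \<Longrightarrow> y \<in> X \<Longrightarrow> m / 2 * (N (x - y))\<^sup>2 \<le> bregman Phi gPhi x y"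
  shows "strongly_convex_on N m X Phi"
  unfolding strongly_convex_on_def
proof (intro ballI allI impI)
  fix x y and t :: real
  assume xy: "x \<in> X" "y \<in> X" and t: "0 \<le> t" "t \<le> 1"
  define z where "z = (1 - t) *\<^sub>R x + t *\<^sub>R y"
  define n where "n = N (y - x)"
  define a where "a = gPhi z \<bullet> (x - y)"
  have zX: "z \<in> X"
    unfolding z_def using convexD_alt[OF \<open>convex X\<close> xy] t by simp
  have xz: "x - z = t *\<^sub>R (x - y)" and yz: "y - z = (1 - t) *\<^sub>R (y - x)"
    unfolding z_def by (simp_all add: algebra_simps)
  have "N (x - z) = t * n" "N (y - z) = (1 - t) * n"
    unfolding xz yz n_def using t
    by (simp_all add: is_norm_scaleR[OF norm] is_norm_minus_commute[OF norm, of x y])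
  moreover have "gPhi z \<bullet> (x - z) = t * a" "gPhi z \<bullet> (y - z) = - ((1 - t) * a)"
    unfolding xz yz a_def by (simp_all add: inner_diff_right algebra_simps)
  ultimately have "m / 2 * (t * n)\<^sup>2 \<le> Phi x - Phi z - t * a"
    and "m / 2 * ((1 - t) * n)\<^sup>2 \<le> Phi y - Phi z + (1 - t) * a"
    using lower[OF xy(1) zX] lower[OF xy(2) zX] unfolding bregman_def by simp_all
  \<comment> \<open>weighting the two bounds by 1 - t and t makes the gradient terms cancel\<close>
  then have "(1 - t) * (m / 2 * (t * n)\<^sup>2) + t * (m / 2 * ((1 - t) * n)\<^sup>2)
      \<le> (1 - t) * (Phi x - Phi z - t * a) + t * (Phi y - Phi z + (1 - t) * a)"
    using t by (intro add_mono mult_left_mono) auto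
  moreover have "(1 - t) * (m / 2 * (t * n)\<^sup>2) + t * (m / 2 * ((1 - t) * n)\<^sup>2)
      = m / 2 * t * (1 - t) * n\<^sup>2"
    by (simp add: power2_eq_square field_simps)
  moreover have "(1 - t) * (Phi x - Phi z - t * a) + t * (Phi y - Phi z + (1 - t) * a)
      = (1 - t) * Phi x + t * Phi y - Phi z"
    by (simp add: algebra_simps)
  ultimately show "Phi ((1 - t) *\<^sub>R x + t *\<^sub>R y)
      \<le> (1 - t) * Phi x + t * Phi y - m / 2 * t * (1 - t) * (N (y - x))\<^sup>2"
    unfolding z_def n_def by linarith
qed

lemma strongly_convex_on_min_growth:
  assumes "strongly_convex_on N m K g" "convex K"
    and "p \<in> K" "\<And>y. y \<in> K \<Longrightarrow> g p \<le> g y" "y \<in> K"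
  shows "g p + m / 4 * (N (y - p))\<^sup>2 \<le> g y"
proof -
  define z where "z = (1 - 1/2) *\<^sub>R p + (1/2::real) *\<^sub>R y"
  have "z \<in> K"
    unfolding z_def using convexD_alt[OF assms(2,3,5), of "1/2"] by simp
  then have "g p \<le> g z"
    by (rule assms(4))
  also have "g z \<le> (1 - 1/2) * g p + (1/2) * g y - m / 2 * (1/2) * (1 - 1/2) * (N (y - p))\<^sup>2"
    unfolding z_def by (rule strongly_convex_onD[OF assms(1,3,5)]) auto
  finally show ?thesis
    by simp
qed

section \<open>Minimisation over sublevel sets\<close>

lemma convex_on_imp_convex_sublevel:
  assumes "convex_on X f"
  shows "convex {x \<in> X. f x \<le> l}"
proof -
  have "f ((1 - t) *\<^sub>R x + t *\<^sub>R y) \<le> l"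
    if "x \<in> X" "y \<in> X" "f x \<le> l" "f y \<le> l" "0 \<le> t" "t \<le> 1" for x y t
  proof -
    have "f ((1 - t) *\<^sub>R x + t *\<^sub>R y) \<le> (1 - t) * f x + t * f y"
      using convex_onD[OF assms] that by blast
    also have "\<dots> \<le> (1 - t) * l + t * l"
      using that by (intro add_mono mult_left_mono) auto
    finally show ?thesis
      by (simp add: algebra_simps)
  qed
  then show ?thesis
    using convexD_alt[OF convex_on_imp_convex[OF assms]] by (auto simp: convex_alt)
qed

lemma exists_min_on_bounded_sublevel:
  fixes g :: "'a::heine_borel \<Rightarrow> real"
  assumes "closed K" "continuous_on K g" "y0 \<in> K" "bounded {y \<in> K. g y \<le> g y0}"
  obtains p where "p \<in> K" "\<And>y. y \<in> K \<Longrightarrow> g p \<le> g y"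
proof -
  let ?A = "{y \<in> K. g y \<le> g y0}"
  have "closed ?A"
    using continuous_closed_preimage[OF assms(2,1) closed_atMost, of "g y0"]
    by (simp add: vimage_def Int_def)
  then have "compact ?A"
    using assms(4) by (simp add: compact_eq_bounded_closed)
  moreover have "?A \<noteq> {}"
    using assms(3) by blast
  moreover have "continuous_on ?A g"
    by (rule continuous_on_subset[OF assms(2)]) blast
  ultimately have "\<exists>p\<in>?A. \<forall>y\<in>?A. g p \<le> g y"
    by (rule continuous_attains_inf)
  then obtain p where p: "p \<in> ?A" "\<forall>y\<in>?A. g p \<le> g y" ..
  show thesis
  proof (rule that)
    show "p \<in> K"
      using p(1) by simp
    show "g p \<le> g y" if "y \<in> K" for y
    proof (cases "g y \<le> g y0")
      case True
      then show ?thesis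
        using p(2) that by blast
    next
      case False
      then show ?thesis
        using p(1) by simp
    qed
  qed
qed

lemma convex_on_sublevel_min_value:
  assumes f: "convex_on X f" and g: "convex_on X g" and "convex S"
    and min: "\<And>l. l \<in> S \<Longrightarrow> p l \<in> X \<and> f (p l) \<le> l \<and> (\<forall>y\<in>X. f y \<le> l \<longrightarrow> g (p l) \<le> g y)"
  shows "convex_on S (\<lambda>l. g (p l))"
proof (rule convex_onI[OF _ \<open>convex S\<close>])
  fix t l1 l2 :: real assume t: "0 < t" "t < 1" and l: "l1 \<in> S" "l2 \<in> S"
  let ?l = "(1 - t) *\<^sub>R l1 + t *\<^sub>R l2" and ?z = "(1 - t) *\<^sub>R p l1 + t *\<^sub>R p l2"
  have "?l \<in> S"
    using convexD_alt[OF \<open>convex S\<close> l] t by simp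
  have p: "p l1 \<in> X" "f (p l1) \<le> l1" "p l2 \<in> X" "f (p l2) \<le> l2"
    using min[OF l(1)] min[OF l(2)] by auto
  have "?z \<in> X"
    using convexD_alt[OF convex_on_imp_convex[OF f] p(1,3)] t by simp
  moreover have "f ?z \<le> ?l"
  proof -
    have "f ?z \<le> (1 - t) * f (p l1) + t * f (p l2)"
      using convex_onD[OF f] p t by simp
    also have "\<dots> \<le> ?l"
      using p t by (simp add: add_mono mult_left_mono)
    finally show ?thesis .
  qed
  ultimately have "g (p ?l) \<le> g ?z"
    using min[OF \<open>?l \<in> S\<close>] by blast
  also have "\<dots> \<le> (1 - t) * g (p l1) + t * g (p l2)"
    using convex_onD[OF g] p t by simp
  finally show "g (p ?l) \<le> (1 - t) * g (p l1) + t * g (p l2)" .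
qed

lemma min_on_slack_sublevel_imp_min:
  assumes f: "convex_on X f" and g: "convex_on X g"
    and "p \<in> X" "f p < l" and min: "\<And>y. y \<in> X \<Longrightarrow> f y \<le> l \<Longrightarrow> g p \<le> g y"
    and "y \<in> X"
  shows "g p \<le> g y"
proof -
  define t where "t = min 1 ((l - f p) / (\<bar>f y - f p\<bar> + 1))"
  have t: "0 < t" "t \<le> 1"
    using \<open>f p < l\<close> by (auto simp: t_def)
  let ?z = "(1 - t) *\<^sub>R p + t *\<^sub>R y"
  have "?z \<in> X"
    using convexD_alt[OF convex_on_imp_convex[OF f] \<open>p \<in> X\<close> \<open>y \<in> X\<close>] t by simp
  moreover have "f ?z \<le> l"
  proof -
    have "t * (f y - f p) \<le> t * \<bar>f y - f p\<bar>"
      using t by (intro mult_left_mono) auto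
    also have "\<dots> \<le> (l - f p) / (\<bar>f y - f p\<bar> + 1) * \<bar>f y - f p\<bar>"
      unfolding t_def by (intro mult_right_mono) auto
    also have "\<dots> \<le> l - f p"
      using \<open>f p < l\<close> by (simp add: field_simps)
    finally have "(1 - t) * f p + t * f y \<le> l"
      by (simp add: algebra_simps)
    then show ?thesis
      using convex_onD[OF f, of t p y] t assms(3,6) by simp
  qed
  ultimately have "g p \<le> g ?z"
    by (rule min)
  also have "\<dots> \<le> (1 - t) * g p + t * g y"
    using convex_onD[OF g] t assms(3,6) by simp
  finally show ?thesis
    using t(1) by (simp add: algebra_simps)
qed

lemma continuous_on_sq_dist_le:
  fixes S :: "'a::metric_space set"
  assumes v: "continuous_on S v" and "0 < \<alpha>"
    and le: "\<And>l l'. l \<in> S \<Longrightarrow> l' \<in> S \<Longrightarrow> \<alpha> * (dist (p l) (p l'))\<^sup>2 \<le> dist (v l) (v l')"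
  shows "continuous_on S p"
  unfolding continuous_on_iff
proof (intro ballI allI impI)
  fix l and e :: real assume "l \<in> S" "0 < e"
  then have "0 < \<alpha> * e\<^sup>2"
    using \<open>0 < \<alpha>\<close> by simp
  then obtain d where "0 < d" and d: "\<And>l'. l' \<in> S \<Longrightarrow> dist l' l < d \<Longrightarrow> dist (v l') (v l) < \<alpha> * e\<^sup>2"
    using v \<open>l \<in> S\<close> unfolding continuous_on_iff by blast
  have "dist (p l') (p l) < e" if "l' \<in> S" "dist l' l < d" for l'
  proof -
    have "\<alpha> * (dist (p l') (p l))\<^sup>2 < \<alpha> * e\<^sup>2"
      using le[OF that(1) \<open>l \<in> S\<close>] d[OF that] by linarith
    then have "(dist (p l') (p l))\<^sup>2 < e\<^sup>2"
      using \<open>0 < \<alpha>\<close> by simp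
    then show ?thesis
      using \<open>0 < e\<close> by (simp add: power_less_imp_less_base)
  qed
  then show "\<exists>d>0. \<forall>l'\<in>S. dist l' l < d \<longrightarrow> dist (p l') (p l) < e"
    using \<open>0 < d\<close> by blast
qed

lemma convex_on_above_tangent_has_derivative:
  fixes f :: "'a::real_inner \<Rightarrow> real"
  assumes cv: "convex_on X f" and xy: "x \<in> X" "y \<in> X"
    and der: "(f has_derivative (\<lambda>v. g \<bullet> v)) (at x)"
  shows "f x + g \<bullet> (y - x) \<le> f y"
proof (rule ccontr)
  assume "\<not> ?thesis"
  then have pos: "0 < g \<bullet> (y - x) - (f y - f x)"
    by simp
  \<comment> \<open>the convexity gap along the segment has positive derivative at 0, yet is \<open>\<le> 0\<close> on [0, 1]\<close>
  have line: "((\<lambda>t. x + t *\<^sub>R (y - x)) has_derivative (\<lambda>t. t *\<^sub>R (y - x))) (at (0::real))"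
    by (auto intro!: derivative_eq_intros)
  have "(f has_derivative (\<lambda>v. g \<bullet> v)) (at (x + 0 *\<^sub>R (y - x)))"
    using der by simp
  from has_derivative_compose[OF line this]
  have "((\<lambda>t. f (x + t *\<^sub>R (y - x))) has_derivative (\<lambda>t. g \<bullet> (t *\<^sub>R (y - x)))) (at (0::real))"
    by simp
  then have "((\<lambda>t. f (x + t *\<^sub>R (y - x)) - t * (f y - f x)) has_derivative
      (\<lambda>t. g \<bullet> (t *\<^sub>R (y - x)) - t * (f y - f x))) (at (0::real))"
    by (intro derivative_eq_intros) auto
  then have "DERIV (\<lambda>t. f (x + t *\<^sub>R (y - x)) - t * (f y - f x)) 0 :> g \<bullet> (y - x) - (f y - f x)"
    unfolding has_field_derivative_def
    by (rule has_derivative_eq_rhs) (auto simp: algebra_simps fun_eq_iff)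
  from DERIV_pos_inc_right[OF this pos] obtain d where "0 < d"
    and d: "\<And>h. 0 < h \<Longrightarrow> h < d \<Longrightarrow> f x < f (x + h *\<^sub>R (y - x)) - h * (f y - f x)"
    by auto
  define h where "h = min (d / 2) (1 / 2)"
  have h: "0 < h" "h < d" "h \<le> 1"
    using \<open>0 < d\<close> by (auto simp: h_def)
  have "f ((1 - h) *\<^sub>R x + h *\<^sub>R y) \<le> (1 - h) * f x + h * f y"
    using convex_onD[OF cv, of h x y] h xy by simp
  moreover have "(1 - h) *\<^sub>R x + h *\<^sub>R y = x + h *\<^sub>R (y - x)"
    by (simp add: algebra_simps)
  ultimately show False
    using d[OF h(1,2)] by (simp add: algebra_simps)
qed

section \<open>Bregman projections onto sublevel sets\<close>

locale bregman_sublevel_projection =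
  fixes N :: "'a::euclidean_space \<Rightarrow> real"
    and Phi f :: "'a \<Rightarrow> real"
    and gPhi :: "'a \<Rightarrow> 'a"
    and X :: "'a set"
    and x0 :: 'a
    and m :: real
  assumes norm: "is_norm N"
    and m_pos: "0 < m"
    and bregman_lower: "\<And>x y. x \<in> X \<Longrightarrow> y \<in> X \<Longrightarrow> m / 2 * (N (x - y))\<^sup>2 \<le> bregman Phi gPhi x y"
    and X_convex: "convex X" and X_closed: "closed X"
    and f_convex: "convex_on X f" and f_cont: "continuous_on X f"
    and Phi_cont: "continuous_on X Phi"
    and x0_in: "x0 \<in> X"
begin

definition D :: "'a \<Rightarrow> real"
  where "D y = bregman Phi gPhi y x0"

definition sublevel :: "real \<Rightarrow> 'a set"
  where "sublevel l = {x \<in> X. f x \<le> l}"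

definition levels :: "real set"
  where "levels = {l. \<exists>x\<in>X. f x < l}"

definition proj :: "real \<Rightarrow> 'a"
  where "proj l = bregman_proj Phi gPhi (sublevel l) x0"

lemma D_x0: "D x0 = 0"
  by (simp add: D_def bregman_def)

lemma D_lower: "y \<in> X \<Longrightarrow> m / 2 * (N (y - x0))\<^sup>2 \<le> D y"
  unfolding D_def using bregman_lower x0_in by blast

lemma D_le_0_imp_eq:
  assumes "y \<in> X" "D y \<le> 0"
  shows "y = x0"
proof -
  have "m / 2 * (N (y - x0))\<^sup>2 \<le> 0"
    using D_lower[OF assms(1)] assms(2) by linarith
  then have "N (y - x0) = 0"
    using m_pos by (simp add: mult_le_0_iff)
  then show ?thesis
    using is_norm_eq_0_iff[OF norm] by simp
qed

lemma continuous_on_D: "continuous_on X D"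
  unfolding D_def bregman_def by (intro continuous_intros Phi_cont)

lemma strongly_convex_on_D: "strongly_convex_on N m X D"
proof -
  have D_affine: "D = (\<lambda>y. Phi y + (- gPhi x0) \<bullet> y + (gPhi x0 \<bullet> x0 - Phi x0))"
    by (auto simp: D_def bregman_def inner_diff_right)
  show ?thesis
    unfolding D_affine
    by (rule strongly_convex_on_add_affine[OF
          strongly_convex_on_bregman_lower_bound[OF norm X_convex bregman_lower]])
qed

lemma convex_on_D: "convex_on X D"
  using strongly_convex_on_imp_convex_on[OF strongly_convex_on_D X_convex] m_pos by simp

lemma bounded_D_sublevel: "bounded {y \<in> X. D y \<le> a}"
proof -
  obtain c where c: "0 < c" "\<And>x. c * norm x \<le> N x"
    using is_norm_ge_norm[OF norm] by blast
  have "norm (y - x0) \<le> sqrt (2 * a / m) / c" if "y \<in> X" "D y \<le> a" for y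
  proof -
    have "(N (y - x0))\<^sup>2 \<le> 2 * a / m"
      using D_lower[OF that(1)] that(2) m_pos by (simp add: field_simps)
    then have "c * norm (y - x0) \<le> sqrt (2 * a / m)"
      using c(2)[of "y - x0"] real_le_rsqrt by fastforce
    then show ?thesis
      using c(1) by (simp add: field_simps)
  qed
  then have "{y \<in> X. D y \<le> a} \<subseteq> cball x0 (sqrt (2 * a / m) / c)"
    by (auto simp: dist_norm norm_minus_commute)
  then show ?thesis
    using bounded_cball bounded_subset by blast
qed

lemma sublevel_subset: "sublevel l \<subseteq> X"
  by (auto simp: sublevel_def)

lemma convex_sublevel: "convex (sublevel l)"
  unfolding sublevel_def by (rule convex_on_imp_convex_sublevel[OF f_convex])

lemma closed_sublevel: "closed (sublevel l)"
  using continuous_closed_preimage[OF f_cont X_closed closed_atMost, of l]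
  by (simp add: sublevel_def vimage_def Int_def)

lemma open_levels: "open levels"
proof -
  have "levels = (\<Union>x\<in>X. {f x<..})"
    by (auto simp: levels_def)
  then show ?thesis
    by (simp add: open_UN)
qed

lemma convex_levels: "convex levels"
  unfolding levels_def
  by (rule is_interval_convex) (force simp: is_interval_1)

lemma proj_min:
  assumes "l \<in> levels"
  shows "proj l \<in> sublevel l" "\<And>y. y \<in> sublevel l \<Longrightarrow> D (proj l) \<le> D y"
proof -
  obtain y0 where "y0 \<in> X" "f y0 < l"
    using assms unfolding levels_def by blast
  then have y0: "y0 \<in> sublevel l"
    by (simp add: sublevel_def)
  have "{y \<in> sublevel l. D y \<le> D y0} \<subseteq> {y \<in> X. D y \<le> D y0}"
    using sublevel_subset by blast
  then have "bounded {y \<in> sublevel l. D y \<le> D y0}"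
    by (rule bounded_subset[OF bounded_D_sublevel])
  then obtain p where p: "p \<in> sublevel l" "\<And>y. y \<in> sublevel l \<Longrightarrow> D p \<le> D y"
    using exists_min_on_bounded_sublevel[OF closed_sublevel
          continuous_on_subset[OF continuous_on_D sublevel_subset] y0] by blast
  have "proj l = arg_min D (\<lambda>y. y \<in> sublevel l)"
    by (simp add: proj_def bregman_proj_def D_def[abs_def])
  also have "\<dots> \<in> {q \<in> sublevel l. \<forall>y\<in>sublevel l. D q \<le> D y}"
    by (rule arg_minI[of "\<lambda>y. y \<in> sublevel l" p D]) (use p in \<open>auto simp: not_less\<close>)
  finally have "proj l \<in> sublevel l \<and> (\<forall>y\<in>sublevel l. D (proj l) \<le> D y)"
    by blast
  then show "proj l \<in> sublevel l" "\<And>y. y \<in> sublevel l \<Longrightarrow> D (proj l) \<le> D y"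
    by auto
qed

lemma continuous_on_proj: "continuous_on levels proj"
proof -
  have "convex_on levels (\<lambda>l. D (proj l))"
    using proj_min sublevel_subset
    by (intro convex_on_sublevel_min_value[OF f_convex convex_on_D convex_levels])
       (auto simp: sublevel_def)
  then have value_cont: "continuous_on levels (\<lambda>l. D (proj l))"
    by (rule convex_on_continuous[OF open_levels])
  obtain c where c: "0 < c" "\<And>x. c * norm x \<le> N x"
    using is_norm_ge_norm[OF norm] by blast
  have growth: "m / 4 * c\<^sup>2 * (dist (proj l) (proj l'))\<^sup>2 \<le> D (proj l) - D (proj l')"
    if "l \<in> levels" "l' \<in> levels" "l \<le> l'" for l l'
  proof -
    have "proj l \<in> sublevel l'"
      using proj_min(1)[OF that(1)] that(3) by (auto simp: sublevel_def)
    then have "D (proj l') + m / 4 * (N (proj l - proj l'))\<^sup>2 \<le> D (proj l)"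
      using proj_min[OF that(2)]
      by (intro strongly_convex_on_min_growth[OF
            strongly_convex_on_subset[OF strongly_convex_on_D sublevel_subset] convex_sublevel])
    moreover have "m / 4 * c\<^sup>2 * (dist (proj l) (proj l'))\<^sup>2 = m / 4 * (c * dist (proj l) (proj l'))\<^sup>2"
      by (simp add: power_mult_distrib)
    moreover have "\<dots> \<le> m / 4 * (N (proj l - proj l'))\<^sup>2"
      using c m_pos by (intro mult_left_mono power_mono) (auto simp: dist_norm)
    ultimately show ?thesis
      by linarith
  qed
  have separation: "m / 4 * c\<^sup>2 * (dist (proj l) (proj l'))\<^sup>2 \<le> dist (D (proj l)) (D (proj l'))"
    if "l \<in> levels" "l' \<in> levels" for l l'
    using growth[OF that] growth[OF that(2,1)] abs_ge_self[of "D (proj l) - D (proj l')"]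
      abs_ge_self[of "D (proj l') - D (proj l)"] abs_minus_commute[of "D (proj l)" "D (proj l')"]
    by (cases "l \<le> l'") (auto simp: dist_real_def dist_commute)
  have "0 < m / 4 * c\<^sup>2"
    using m_pos c(1) by simp
  then show ?thesis
    by (rule continuous_on_sq_dist_le[OF value_cont _ separation])
qed

lemma proj_in_X: "l \<in> levels \<Longrightarrow> proj l \<in> X"
  using proj_min(1) sublevel_subset by blast

lemma proj_eq_x0_if_min:
  assumes "\<forall>y\<in>X. f x0 \<le> f y" "l \<in> levels"
  shows "proj l = x0"
proof (rule D_le_0_imp_eq[OF proj_in_X[OF assms(2)]])
  have "x0 \<in> sublevel l"
    using assms x0_in by (force simp: levels_def sublevel_def)
  then show "D (proj l) \<le> 0"
    using proj_min(2)[OF assms(2)] D_x0 by metis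
qed

lemma proj_global_min_imp_x0_global_min:
  assumes "l \<in> levels" and p_min: "\<And>y. y \<in> X \<Longrightarrow> f (proj l) \<le> f y" and "y \<in> X"
  shows "f x0 \<le> f y"
proof -
  obtain w where "w \<in> X" "f w < l"
    using assms(1) by (auto simp: levels_def)
  then have slack: "f (proj l) < l"
    using p_min[of w] by linarith
  have "\<And>y. y \<in> X \<Longrightarrow> f y \<le> l \<Longrightarrow> D (proj l) \<le> D y"
    using proj_min(2)[OF assms(1)] by (simp add: sublevel_def)
  then have "D (proj l) \<le> D x0"
    by (rule min_on_slack_sublevel_imp_min[OF f_convex convex_on_D proj_in_X[OF assms(1)] slack _ x0_in])
  then have "proj l = x0"
    using D_x0 by (intro D_le_0_imp_eq[OF proj_in_X[OF assms(1)]]) simp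
  then show ?thesis
    using p_min[OF assms(3)] by simp
qed

lemma gradient_at_proj_nonzero:
  assumes f_deriv: "\<And>x. x \<in> X \<Longrightarrow> (f has_derivative (\<lambda>v. gf x \<bullet> v)) (at x)"
    and "\<not> (\<forall>y\<in>X. f x0 \<le> f y)" "l \<in> levels"
  shows "gf (proj l) \<noteq> 0"
proof
  assume "gf (proj l) = 0"
  have pX: "proj l \<in> X"
    by (rule proj_in_X[OF assms(3)])
  have "f (proj l) \<le> f y" if "y \<in> X" for y
    using convex_on_above_tangent_has_derivative[OF f_convex pX that f_deriv[OF pX]]
      \<open>gf (proj l) = 0\<close> by simp
  then show False
    using proj_global_min_imp_x0_global_min[OF assms(3)] assms(2) by blast
qed

end

theorem lemma5:
  fixes N :: "'a::euclidean_space \<Rightarrow> real"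
    and Phi f :: "'a \<Rightarrow> real"
    and gPhi gf :: "'a \<Rightarrow> 'a"
    and X :: "'a set"
    and x0 :: 'a
    and m M :: real
  assumes norm: "is_norm N"
    and mM: "0 < m" "m \<le> M"
    and breg_bounds: "\<And>x y. x \<in> X \<Longrightarrow> y \<in> X \<Longrightarrow>
           m / 2 * (N (x - y))\<^sup>2 \<le> bregman Phi gPhi x y \<and>
           bregman Phi gPhi x y \<le> M / 2 * (N (x - y))\<^sup>2"
    and X_convex: "convex X" and X_closed: "closed X"
    and f_convex: "convex_on X f"
    and Phi_deriv: "\<And>x. x \<in> X \<Longrightarrow> (Phi has_derivative (\<lambda>v. gPhi x \<bullet> v)) (at x)"
    and gPhi_cont: "continuous_on X gPhi"
    and f_deriv: "\<And>x. x \<in> X \<Longrightarrow> (f has_derivative (\<lambda>v. gf x \<bullet> v)) (at x)"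
    and gf_cont: "continuous_on X gf"
    and x0_in: "x0 \<in> X"
  defines "xl \<equiv> (\<lambda>l. bregman_proj Phi gPhi {x \<in> X. f x \<le> l} x0)"
  shows "continuous_on {l. \<exists>x\<in>X. f x < l}
           (\<lambda>l. dual_norm N (gPhi x0 - gPhi (xl l)) / dual_norm N (gf (xl l)))"
proof -
  \<comment> \<open>only the lower Bregman bound is needed\<close>
  have bregman_lower: "\<And>x y. x \<in> X \<Longrightarrow> y \<in> X \<Longrightarrow> m / 2 * (N (x - y))\<^sup>2 \<le> bregman Phi gPhi x y"
    using breg_bounds by blast
  have Phi_cont: "continuous_on X Phi"
    by (meson Phi_deriv continuous_at_imp_continuous_on has_derivative_continuous)
  have f_cont: "continuous_on X f"
    by (meson f_deriv continuous_at_imp_continuous_on has_derivative_continuous)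
  interpret bregman_sublevel_projection N Phi f gPhi X x0 m
    by (rule bregman_sublevel_projection.intro[OF norm mM(1) bregman_lower
          X_convex X_closed f_convex f_cont Phi_cont x0_in])
  have xl: "xl = proj"
    by (rule ext) (simp add: xl_def proj_def sublevel_def)
  have S: "{l. \<exists>x\<in>X. f x < l} = levels"
    by (simp add: levels_def)
  have proj_X: "proj ` levels \<subseteq> X"
    using proj_in_X by blast
  have num: "continuous_on levels (\<lambda>l. dual_norm N (gPhi x0 - gPhi (proj l)))"
    and den: "continuous_on levels (\<lambda>l. dual_norm N (gf (proj l)))"
    by (rule continuous_on_compose2[OF continuous_on_dual_norm[OF norm] _ subset_UNIV],
        intro continuous_on_diff continuous_on_const
          continuous_on_compose2[OF gPhi_cont continuous_on_proj proj_X]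
          continuous_on_compose2[OF gf_cont continuous_on_proj proj_X])+
  have "continuous_on levels (\<lambda>l. dual_norm N (gPhi x0 - gPhi (proj l)) / dual_norm N (gf (proj l)))"
  proof (cases "\<forall>y\<in>X. f x0 \<le> f y")
    case True
    \<comment> \<open>\<open>gf x0\<close> may vanish here; the quotient is then the constant 0 / 0 = 0\<close>
    then show ?thesis
      by (intro continuous_on_eq[OF continuous_on_const]) (simp add: proj_eq_x0_if_min)
  next
    case False
    then have "dual_norm N (gf (proj l)) \<noteq> 0" if "l \<in> levels" for l
      using dual_norm_pos[OF norm gradient_at_proj_nonzero[OF f_deriv False that]] by simp
    then show ?thesis
      by (intro continuous_on_divide num den) auto
  qed
  then show ?thesis
    unfolding xl S .
qed

end
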